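(* Let $d\in\mathbb{N}$ and let $G$ be a countably infinite $d$-degenerate graph. Then $G$ does not contain $d+1$ pairwise disjoint minimal ruling sets; that is, $\mathrm{rul}(G)\le d$.
   Context: A countably infinite graph $G$ is $d$-degenerate if there is an enumeration $v_1,v_2,\dots$ of $V(G)$ (indexed by $\mathbb{N}$) such that each $v_i$ has at most $d$ neighbors in $\{v_1,\dots,v_{i-1}\}$. A set $X\subseteq V(G)$ is ruling if $X$ is finite and all but finitely many vertices of $V(G)\setminus X$ have a neighbor in $X$; a minimal ruling set is a ruling set no proper subset of which is ruling. $\mathrm{rul}(G)$ is the smallest $t\in\{0,1,2,\dots\}$ such that $G$ has at most $t$ pairwise disjoint minimal ruling sets ($\infty$ if no such $t$ exists). *)

theory Defs
  imports Main "HOL-Library.Countable_Set" "HOL-Library.Extended_Nat"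
begin

definition simple_graph :: "'a set \<Rightarrow> ('a \<Rightarrow> 'a \<Rightarrow> bool) \<Rightarrow> bool" where
  "simple_graph V E \<longleftrightarrow>
     (\<forall>x y. E x y \<longrightarrow> x \<in> V \<and> y \<in> V) \<and>
     (\<forall>x y. E x y \<longrightarrow> E y x) \<and>
     (\<forall>x. \<not> E x x)"

definition countably_infinite_graph :: "'a set \<Rightarrow> ('a \<Rightarrow> 'a \<Rightarrow> bool) \<Rightarrow> bool" where
  "countably_infinite_graph V E \<longleftrightarrow> simple_graph V E \<and> countable V \<and> infinite V"

definition degenerate :: "nat \<Rightarrow> 'a set \<Rightarrow> ('a \<Rightarrow> 'a \<Rightarrow> bool) \<Rightarrow> bool" where
  "degenerate d V E \<longleftrightarrow>
     (\<exists>v :: nat \<Rightarrow> 'a. bij_betw v UNIV V \<and>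
        (\<forall>i. card {j. j < i \<and> E (v i) (v j)} \<le> d))"

definition ruling :: "'a set \<Rightarrow> ('a \<Rightarrow> 'a \<Rightarrow> bool) \<Rightarrow> 'a set \<Rightarrow> bool" where
  "ruling V E X \<longleftrightarrow> X \<subseteq> V \<and> finite X \<and>
     finite {u \<in> V - X. \<not> (\<exists>x\<in>X. E u x)}"

definition minimal_ruling :: "'a set \<Rightarrow> ('a \<Rightarrow> 'a \<Rightarrow> bool) \<Rightarrow> 'a set \<Rightarrow> bool" where
  "minimal_ruling V E X \<longleftrightarrow> ruling V E X \<and> (\<forall>Y. Y \<subset> X \<longrightarrow> \<not> ruling V E Y)"

definition at_most_disj_min_ruling :: "'a set \<Rightarrow> ('a \<Rightarrow> 'a \<Rightarrow> bool) \<Rightarrow> nat \<Rightarrow> bool" where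
  "at_most_disj_min_ruling V E t \<longleftrightarrow>
     (\<forall>F. (\<forall>X\<in>F. minimal_ruling V E X) \<and>
        (\<forall>X\<in>F. \<forall>Y\<in>F. X \<noteq> Y \<longrightarrow> X \<inter> Y = {}) \<longrightarrow> finite F \<and> card F \<le> t)"

definition rul :: "'a set \<Rightarrow> ('a \<Rightarrow> 'a \<Rightarrow> bool) \<Rightarrow> enat" where
  "rul V E = (if \<exists>t. at_most_disj_min_ruling V E t
              then enat (LEAST t. at_most_disj_min_ruling V E t) else \<infinity>)"

end

theory Submission
  imports Defs
begin

text \<open>Given \<open>d + 1\<close> pairwise disjoint ruling sets, all but finitely many vertices have a
  neighbour in each of them. Go far enough along the degeneracy order that such a vertex
  comes after every vertex of the ruling sets: its neighbours in the \<open>d + 1\<close> sets are then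
  \<open>d + 1\<close> distinct earlier neighbours, contradicting \<open>d\<close>-degeneracy.\<close>

lemma card_le_if_disjoint_sets_meet:
  assumes "finite S"
    and meet: "\<forall>X\<in>F. X \<inter> S \<noteq> {}"
    and disj: "\<forall>X\<in>F. \<forall>Y\<in>F. X \<noteq> Y \<longrightarrow> X \<inter> Y = {}"
  shows "finite F \<and> card F \<le> card S"
proof -
  define f where "f X = (SOME x. x \<in> X \<inter> S)" for X
  have f: "f X \<in> X \<inter> S" if "X \<in> F" for X
  proof -
    have "\<exists>x. x \<in> X \<inter> S" using meet that by blast
    then show ?thesis unfolding f_def by (rule someI_ex)
  qed
  have "inj_on f F"
  proof (rule inj_onI)
    fix X Y assume "X \<in> F" "Y \<in> F" "f X = f Y"
    then have "f X \<in> X \<inter> Y" using f[of X] f[of Y] by auto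
    then show "X = Y" using disj \<open>X \<in> F\<close> \<open>Y \<in> F\<close> by blast
  qed
  moreover have "f ` F \<subseteq> S" using f by blast
  ultimately show ?thesis
    using \<open>finite S\<close> by (meson card_inj_on_le inj_on_finite)
qed

lemma finite_undominated_vertices:
  assumes "finite F" and "\<forall>X\<in>F. ruling V E X"
  shows "finite {u \<in> V. \<exists>X\<in>F. \<not> (\<exists>x\<in>X. E u x)}"
proof (rule finite_subset)
  show "{u \<in> V. \<exists>X\<in>F. \<not> (\<exists>x\<in>X. E u x)}
          \<subseteq> \<Union>F \<union> (\<Union>X\<in>F. {u \<in> V - X. \<not> (\<exists>x\<in>X. E u x)})"
    by blast
  show "finite (\<Union>F \<union> (\<Union>X\<in>F. {u \<in> V - X. \<not> (\<exists>x\<in>X. E u x)}))"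
    using assms by (auto simp: ruling_def)
qed

lemma enumeration_beyond_finite_set:
  assumes "bij_betw v (UNIV :: nat set) V" and "finite B"
  obtains i where "v i \<notin> B" and "\<forall>b\<in>B. inv v b < i"
proof -
  obtain N where N: "inv v ` B \<subseteq> {..<N}"
    using \<open>finite B\<close> finite_nat_iff_bounded by blast
  have "inj v" using assms(1) by (simp add: bij_betw_def)
  then have "v N \<notin> B" using N by (metis imageI inv_f_f lessThan_iff less_irrefl subsetD)
  moreover have "\<forall>b\<in>B. inv v b < N" using N by blast
  ultimately show thesis by (rule that)
qed

lemma disjoint_ruling_sets_card_le:
  assumes "degenerate d V E"
    and ruling: "\<forall>X\<in>F. ruling V E X"
    and disj: "\<forall>X\<in>F. \<forall>Y\<in>F. X \<noteq> Y \<longrightarrow> X \<inter> Y = {}"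
  shows "finite F \<and> card F \<le> d"
proof -
  obtain v :: "nat \<Rightarrow> 'a" where v: "bij_betw v UNIV V"
    and back_deg: "\<forall>i. card {j. j < i \<and> E (v i) (v j)} \<le> d"
    using assms(1) unfolding degenerate_def by blast
  have rng: "range v = V" using v by (simp add: bij_betw_def)
  show ?thesis
  proof (rule finite_if_finite_subsets_card_bdd)
    fix G assume "G \<subseteq> F" "finite G"
    define B where "B = \<Union>G \<union> {u \<in> V. \<exists>X\<in>G. \<not> (\<exists>x\<in>X. E u x)}"
    have ruling_G: "\<forall>X\<in>G. ruling V E X" using ruling \<open>G \<subseteq> F\<close> by blast
    then have "\<Union>G \<subseteq> V" and "finite (\<Union>G)"
      using \<open>finite G\<close> by (auto simp: ruling_def)
    then have "finite B"
      unfolding B_def using finite_undominated_vertices[OF \<open>finite G\<close> ruling_G] by blast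
    then obtain i where i_late: "v i \<notin> B" and earlier: "\<forall>b\<in>B. inv v b < i"
      using enumeration_beyond_finite_set v by blast
    define S where "S = v ` {j. j < i \<and> E (v i) (v j)}"
    have "X \<inter> S \<noteq> {}" if "X \<in> G" for X
    proof -
      have "v i \<in> V" using rng by blast
      then obtain x where "x \<in> X" "E (v i) x"
        using i_late \<open>X \<in> G\<close> unfolding B_def by blast
      have "x \<in> \<Union>G" using \<open>x \<in> X\<close> \<open>X \<in> G\<close> by blast
      then have "v (inv v x) = x" and "inv v x < i"
        using \<open>\<Union>G \<subseteq> V\<close> rng earlier unfolding B_def by (auto simp: f_inv_into_f)
      then have "x \<in> S"
        unfolding S_def using \<open>E (v i) x\<close> by (metis (mono_tags, lifting) image_eqI mem_Collect_eq)
      then show ?thesis using \<open>x \<in> X\<close> by blast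
    qed
    moreover have "\<forall>X\<in>G. \<forall>Y\<in>G. X \<noteq> Y \<longrightarrow> X \<inter> Y = {}" using disj \<open>G \<subseteq> F\<close> by blast
    ultimately have "card G \<le> card S"
      using card_le_if_disjoint_sets_meet[of S G] unfolding S_def by auto
    also have "\<dots> \<le> card {j. j < i \<and> E (v i) (v j)}"
      unfolding S_def by (rule card_image_le) simp
    also have "\<dots> \<le> d" using back_deg by blast
    finally show "card G \<le> d" .
  qed
qed

lemma rul_le_if_at_most_disj_min_ruling:
  assumes "at_most_disj_min_ruling V E t"
  shows "rul V E \<le> enat t"
proof -
  have "rul V E = enat (LEAST t. at_most_disj_min_ruling V E t)"
    using assms by (auto simp: rul_def)
  also have "\<dots> \<le> enat t" using Least_le[of _ t] assms by simp
  finally show ?thesis .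
qed

text \<open>The degeneracy enumeration alone already makes \<open>V\<close> countably infinite.\<close>

theorem mainTheorem4:
  fixes V :: "'a set" and E :: "'a \<Rightarrow> 'a \<Rightarrow> bool" and d :: nat
  assumes "countably_infinite_graph V E"
    and "degenerate d V E"
  shows "rul V E \<le> enat d"
proof (rule rul_le_if_at_most_disj_min_ruling)
  show "at_most_disj_min_ruling V E d"
    unfolding at_most_disj_min_ruling_def
  proof (intro allI impI)
    fix F assume "(\<forall>X\<in>F. minimal_ruling V E X) \<and> (\<forall>X\<in>F. \<forall>Y\<in>F. X \<noteq> Y \<longrightarrow> X \<inter> Y = {})"
    then show "finite F \<and> card F \<le> d"
      using disjoint_ruling_sets_card_le[OF assms(2)] by (simp add: minimal_ruling_def)
  qed
qed

end
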